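(* There is an isomorphism of multiplicative groups $\sigma:(\mathbb Q\setminus\{0\},\cdot)\to(\mathbb F_3(t)\setminus\{0\},\cdot)$, and letting $\lambda\in\mathbb Q$ act on $V=\mathbb Q\oplus\mathbb F_3(t)$ by $\lambda(v_1,v_2)=(\lambda v_1,\sigma(\lambda)v_2)$ (with $\sigma(0)=0$) makes $(V,\mathbb Q)$ a near vector space over the commutative $F=\mathbb Q$ whose two blocks $\mathbb Q\oplus0$ and $0\oplus\mathbb F_3(t)$ induce fields $(F,+_u,\circ)$ of different characteristics ($0$ and $3$).
   Context: A near vector space $(V,F)$: $(V,+)$ a group, $F$ a set of endomorphisms containing $0,1,-1$, with $F\setminus\{0\}$ a subgroup of $\mathrm{Aut}(V,+)$ acting fixed point freely ($\alpha x=\beta x\Rightarrow\alpha=\beta$ or $x=0$), such that the quasi-kernel $Q(V)=\{u:\forall\alpha,\beta\in F\,\exists\gamma\in F\ \alpha u+\beta u=\gamma u\}$ generates $V$. For $u\in Q(V)\setminus\{0\}$, $\alpha+_u\beta$ is the unique $\gamma\in F$ with $\alpha u+\beta u=\gamma u$; for commutative $F$, $(F,+_u,\circ)$ is a field. Blocks are the summands in André's decomposition of $V$ into maximal regular near vector subspaces, each nonzero quasi-kernel element lying in exactly one. *)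

theory Defs
  imports "Berlekamp_Zassenhaus.Finite_Field"
          "HOL-Computational_Algebra.Fraction_Field"
          "HOL-Library.Product_Plus"
          "HOL-Algebra.Ring"
begin

typedef three = "{0::nat, 1, 2}" by auto

instance three :: finite
proof
  have "Rep_three ` UNIV \<subseteq> {0::nat,1,2}" by (rule image_subsetI) (rule Rep_three)
  then have "finite (Rep_three ` UNIV)" by (rule finite_subset) simp
  moreover have "inj Rep_three" by (simp add: inj_on_def Rep_three_inject)
  ultimately show "finite (UNIV :: three set)" using finite_imageD by blast
qed

lemma card_three: "CARD(three) = 3"
proof -
  have "CARD(three) = card (Rep_three ` UNIV)"
    by (simp add: card_image inj_on_def Rep_three_inject)
  also have "Rep_three ` UNIV = {0,1,2}" using type_definition.Rep_range[OF type_definition_three] by simp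
  finally show ?thesis by simp
qed

instance three :: prime_card
  by standard (simp add: card_three)

text \<open>F_3 = three mod_ring, F_3[t] = three mod_ring poly, F_3(t) its field of fractions.\<close>
type_synonym f3t = "three mod_ring poly fract"

inductive_set add_span :: "'v::group_add set \<Rightarrow> 'v set" for S where
  span_zero: "0 \<in> add_span S"
| span_base: "x \<in> S \<Longrightarrow> x \<in> add_span S"
| span_add: "x \<in> add_span S \<Longrightarrow> y \<in> add_span S \<Longrightarrow> x + y \<in> add_span S"
| span_neg: "x \<in> add_span S \<Longrightarrow> - x \<in> add_span S"

text \<open>Endomorphisms are compared on the carrier V only.\<close>
definition zero_on :: "'v::group_add set \<Rightarrow> ('v \<Rightarrow> 'v) \<Rightarrow> bool" where
  "zero_on V \<alpha> \<longleftrightarrow> (\<forall>x\<in>V. \<alpha> x = 0)"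

definition agree_on :: "'v set \<Rightarrow> ('v \<Rightarrow> 'v) \<Rightarrow> ('v \<Rightarrow> 'v) \<Rightarrow> bool" where
  "agree_on V \<alpha> \<beta> \<longleftrightarrow> (\<forall>x\<in>V. \<alpha> x = \<beta> x)"

definition quasi_kernel :: "'v::group_add set \<Rightarrow> ('v \<Rightarrow> 'v) set \<Rightarrow> 'v set" where
  "quasi_kernel V F = {u \<in> V. \<forall>\<alpha>\<in>F. \<forall>\<beta>\<in>F. \<exists>\<gamma>\<in>F. \<alpha> u + \<beta> u = \<gamma> u}"

definition near_vector_space :: "'v::group_add set \<Rightarrow> ('v \<Rightarrow> 'v) set \<Rightarrow> bool" where
  "near_vector_space V F \<longleftrightarrow>
     \<comment> \<open>(V,+) is a group\<close>
     0 \<in> V \<and> (\<forall>x\<in>V. \<forall>y\<in>V. x + y \<in> V) \<and> (\<forall>x\<in>V. - x \<in> V)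
     \<comment> \<open>F is a set of endomorphisms of (V,+)\<close>
   \<and> (\<forall>\<alpha>\<in>F. (\<forall>x\<in>V. \<alpha> x \<in> V) \<and> (\<forall>x\<in>V. \<forall>y\<in>V. \<alpha> (x + y) = \<alpha> x + \<alpha> y))
     \<comment> \<open>0, 1, -1 belong to F\<close>
   \<and> (\<exists>\<alpha>\<in>F. zero_on V \<alpha>) \<and> (\<exists>\<alpha>\<in>F. agree_on V \<alpha> id) \<and> (\<exists>\<alpha>\<in>F. agree_on V \<alpha> uminus)
     \<comment> \<open>F - {0} is a subgroup of Aut(V,+)\<close>
   \<and> (\<forall>\<alpha>\<in>F. \<not> zero_on V \<alpha> \<longrightarrow> bij_betw \<alpha> V V)
   \<and> (\<forall>\<alpha>\<in>F. \<forall>\<beta>\<in>F. \<not> zero_on V \<alpha> \<longrightarrow> \<not> zero_on V \<beta> \<longrightarrow> (\<exists>\<gamma>\<in>F. agree_on V \<gamma> (\<alpha> \<circ> \<beta>)))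
   \<and> (\<forall>\<alpha>\<in>F. \<not> zero_on V \<alpha> \<longrightarrow> (\<exists>\<beta>\<in>F. \<forall>x\<in>V. \<beta> (\<alpha> x) = x))
     \<comment> \<open>fixed point free action\<close>
   \<and> (\<forall>\<alpha>\<in>F. \<forall>\<beta>\<in>F. \<forall>x\<in>V. \<alpha> x = \<beta> x \<longrightarrow> agree_on V \<alpha> \<beta> \<or> x = 0)
     \<comment> \<open>the quasi-kernel generates V\<close>
   \<and> V \<subseteq> add_span (quasi_kernel V F)"

definition regular_nvs :: "'v::group_add set \<Rightarrow> ('v \<Rightarrow> 'v) set \<Rightarrow> bool" where
  "regular_nvs V F \<longleftrightarrow> near_vector_space V F \<and>
     (\<forall>u\<in>quasi_kernel V F - {0}. \<forall>v\<in>quasi_kernel V F - {0}.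
        \<exists>c\<in>F. \<not> zero_on V c \<and> u + c v \<in> quasi_kernel V F)"

definition nvs_block :: "'v::group_add set \<Rightarrow> ('v \<Rightarrow> 'v) set \<Rightarrow> 'v set \<Rightarrow> bool" where
  "nvs_block V F W \<longleftrightarrow> W \<subseteq> V \<and> regular_nvs W F \<and>
     (\<forall>W'. W \<subseteq> W' \<and> W' \<subseteq> V \<and> regular_nvs W' F \<longrightarrow> W' = W)"

definition plus_u :: "('v \<Rightarrow> 'v) set \<Rightarrow> 'v \<Rightarrow> ('v \<Rightarrow> 'v) \<Rightarrow> ('v \<Rightarrow> 'v) \<Rightarrow> ('v \<Rightarrow> 'v::group_add)" where
  "plus_u F u \<alpha> \<beta> = (THE \<gamma>. \<gamma> \<in> F \<and> \<alpha> u + \<beta> u = \<gamma> u)"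

text \<open>The structure (F, +_u, o) (for a near vector space on the whole type, so that the
  zero map and the identity are the zero and unit of F).\<close>
definition qk_ring :: "('v \<Rightarrow> 'v) set \<Rightarrow> 'v \<Rightarrow> ('v \<Rightarrow> 'v::group_add) ring" where
  "qk_ring F u = \<lparr>carrier = F, monoid.mult = (\<circ>), one = id, zero = (\<lambda>x. 0), add = plus_u F u\<rparr>"

definition ring_char_zero :: "('a, 'b) ring_scheme \<Rightarrow> bool" where
  "ring_char_zero R \<longleftrightarrow> (\<forall>n::nat. n > 0 \<longrightarrow> add_pow R n \<one>\<^bsub>R\<^esub> \<noteq> \<zero>\<^bsub>R\<^esub>)"

definition ring_has_char :: "('a, 'b) ring_scheme \<Rightarrow> nat \<Rightarrow> bool" where
  "ring_has_char R p \<longleftrightarrow> p > 0 \<and> add_pow R p \<one>\<^bsub>R\<^esub> = \<zero>\<^bsub>R\<^esub> \<and>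
     (\<forall>n::nat. 0 < n \<and> n < p \<longrightarrow> add_pow R n \<one>\<^bsub>R\<^esub> \<noteq> \<zero>\<^bsub>R\<^esub>)"

end

theory Submission
  imports Defs "HOL-Algebra.QuotRing" "HOL-Library.Countable_Set" "Jordan_Normal_Form.VS_Connect"
begin

text \<open>
  Both multiplicative groups are \<open>{\<plusminus>1}\<close> times a free abelian group on countably many
  generators: \<open>\<int>\<close> and \<open>\<bbbF>\<^sub>3[t]\<close> are factorial with units \<open>\<plusminus>1\<close> and countably infinitely many
  primes, so a bijection between the primes extends multiplicatively to \<open>\<int> \<rightarrow> \<bbbF>\<^sub>3[t]\<close> and
  then to the fraction fields.

  A vector with two nonzero coordinates is not in the quasi-kernel: \<open>1u + 1u = \<gamma>u\<close> would force
  \<open>\<gamma> = 2\<close> and \<open>\<sigma> \<gamma> = 2\<close>, whereas \<open>\<sigma> 2 \<noteq> \<sigma> (-1) = -1 = 2\<close> in \<open>\<bbbF>\<^sub>3(t)\<close>. So the quasi-kernel is the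
  union of the two axes, every regular subspace lies in an axis, and the axes are the blocks.
  On \<open>\<rat> \<oplus> 0\<close> the addition \<open>+\<^sub>u\<close> is that of \<open>\<rat>\<close>, on \<open>0 \<oplus> \<bbbF>\<^sub>3(t)\<close> it is that of
  \<open>\<bbbF>\<^sub>3(t)\<close> pulled back along \<open>\<sigma>\<close>; hence the characteristics \<open>0\<close> and \<open>3\<close>.
\<close>

section \<open>Multiplicative maps determined on primes\<close>

text \<open>In rings whose units are \<open>\<plusminus>1\<close>, \<open>unit_sign\<close> transports the unit factor to another ring.\<close>

definition unit_sign :: "'a::{factorial_semiring_multiplicative, idom} \<Rightarrow> 'b::idom" where
  "unit_sign x = (if unit_factor x = 1 then 1 else -1)"

definition factorwise ::
  "('a \<Rightarrow> 'b) \<Rightarrow> 'a::{factorial_semiring_multiplicative, idom} \<Rightarrow> 'b::{factorial_semiring_multiplicative, idom}"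
where
  "factorwise f x = (if x = 0 then 0 else unit_sign x * prod_mset (image_mset f (prime_factorization x)))"

lemma is_unit_unit_sign: "is_unit (unit_sign x)"
  by (simp add: unit_sign_def)

lemma unit_sign_eq_unit_factor:
  fixes x :: "'a::{factorial_semiring_multiplicative, idom}"
  assumes units: "\<And>u::'a. is_unit u \<Longrightarrow> u = 1 \<or> u = -1" and "x \<noteq> 0"
  shows "unit_sign x = unit_factor x"
  using units[OF unit_factor_is_unit[OF \<open>x \<noteq> 0\<close>]] by (auto simp: unit_sign_def)

lemma unit_sign_mult:
  fixes x y :: "'a::{factorial_semiring_multiplicative, idom}"
  assumes units: "\<And>u::'a. is_unit u \<Longrightarrow> u = 1 \<or> u = -1" and "(1::'a) \<noteq> -1"
    and "x \<noteq> 0" "y \<noteq> 0"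
  shows "(unit_sign (x * y) :: 'b::idom) = unit_sign x * unit_sign y"
  using units[OF unit_factor_is_unit[OF \<open>x \<noteq> 0\<close>]] units[OF unit_factor_is_unit[OF \<open>y \<noteq> 0\<close>]]
    \<open>(1::'a) \<noteq> -1\<close>
  by (auto simp: unit_sign_def unit_factor_mult)

lemma prime_factorization_prod_mset_image:
  assumes "\<And>p. prime p \<Longrightarrow> prime (f p)"
  shows "prime_factorization (prod_mset (image_mset f (prime_factorization x)))
    = image_mset f (prime_factorization x)"
  by (rule prime_factorization_prod_mset_primes) (auto intro: assms simp: in_prime_factors_imp_prime)

lemma factorwise_eq_0_iff:
  assumes "\<And>p. prime p \<Longrightarrow> prime (f p)"
  shows "factorwise f x = 0 \<longleftrightarrow> x = 0"
proof -
  have "f p \<noteq> 0" if "p \<in># prime_factorization x" for p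
    using assms[OF in_prime_factors_imp_prime[OF that]] by auto
  then have "0 \<notin># image_mset f (prime_factorization x)"
    by auto
  then show ?thesis
    by (auto simp: factorwise_def unit_sign_def)
qed

lemma factorwise_mult:
  fixes f :: "'a::{factorial_semiring_multiplicative, idom} \<Rightarrow> 'b::{factorial_semiring_multiplicative, idom}"
  assumes "\<And>u::'a. is_unit u \<Longrightarrow> u = 1 \<or> u = -1" and "(1::'a) \<noteq> -1"
  shows "factorwise f (x * y) = factorwise f x * factorwise f y"
proof (cases "x = 0 \<or> y = 0")
  case False
  then show ?thesis
    by (simp add: factorwise_def prime_factorization_mult unit_sign_mult[OF assms] mult_ac)
qed (auto simp: factorwise_def)

lemma
  assumes prime_f: "\<And>p. prime p \<Longrightarrow> prime (f p)" and "x \<noteq> 0"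
  shows prime_factorization_factorwise:
      "prime_factorization (factorwise f x) = image_mset f (prime_factorization x)"
    and unit_factor_factorwise: "unit_factor (factorwise f x) = unit_sign x"
proof -
  define P where "P = prod_mset (image_mset f (prime_factorization x))"
  have pf_P: "prime_factorization P = image_mset f (prime_factorization x)"
    unfolding P_def by (rule prime_factorization_prod_mset_image[OF prime_f])
  have fx: "factorwise f x = unit_sign x * P" and "unit_sign x \<noteq> 0"
    and unit: "is_unit (unit_sign x)"
    using \<open>x \<noteq> 0\<close> is_unit_unit_sign[of x] by (auto simp: factorwise_def P_def unit_sign_def)
  have "P \<noteq> 0"
    using factorwise_eq_0_iff[of f x, OF prime_f] fx \<open>x \<noteq> 0\<close> by auto
  have "unit_factor P = 1"
  proof -
    have "normalize P = prod_mset (prime_factorization P)"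
      using prod_mset_prime_factorization[OF \<open>P \<noteq> 0\<close>] by simp
    also have "\<dots> = P"
      by (subst pf_P) (simp add: P_def)
    finally show ?thesis
      using unit_factor_normalize[OF \<open>P \<noteq> 0\<close>] by simp
  qed
  then show "unit_factor (factorwise f x) = unit_sign x"
    using is_unit_unit_factor[OF unit] by (simp add: fx unit_factor_mult)
  show "prime_factorization (factorwise f x) = image_mset f (prime_factorization x)"
    using prime_factorization_mult[OF \<open>unit_sign x \<noteq> 0\<close> \<open>P \<noteq> 0\<close>] prime_factorization_unit[OF unit]
    by (simp add: fx pf_P)
qed

lemma factorwise_inverse:
  fixes f :: "'a::{factorial_semiring_multiplicative, idom} \<Rightarrow> 'b::{factorial_semiring_multiplicative, idom}"
    and g :: "'b \<Rightarrow> 'a"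
  assumes prime_g: "\<And>q. prime q \<Longrightarrow> prime (g q)" and f_g: "\<And>q. prime q \<Longrightarrow> f (g q) = q"
    and units: "\<And>u::'b. is_unit u \<Longrightarrow> u = 1 \<or> u = -1" and "(1::'a) \<noteq> -1"
  shows "factorwise f (factorwise g y) = y"
proof (cases "y = 0")
  case False
  let ?z = "factorwise g y"
  have "?z \<noteq> 0"
    using False factorwise_eq_0_iff[of g, OF prime_g] by blast
  have "(unit_sign ?z :: 'b) = unit_sign y"
    using unit_factor_factorwise[of g, OF prime_g False] \<open>(1::'a) \<noteq> -1\<close>
    by (auto simp: unit_sign_def)
  also have "\<dots> = unit_factor y"
    using unit_sign_eq_unit_factor[OF units False] .
  finally have sign: "(unit_sign ?z :: 'b) = unit_factor y" .
  have "image_mset f (image_mset g (prime_factorization y)) = image_mset (\<lambda>q. q) (prime_factorization y)"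
    unfolding multiset.map_comp by (rule image_mset_cong) (simp add: f_g in_prime_factors_imp_prime)
  then have "image_mset f (prime_factorization ?z) = prime_factorization y"
    using prime_factorization_factorwise[of g, OF prime_g False] by simp
  then show ?thesis
    using \<open>?z \<noteq> 0\<close> False sign by (simp add: factorwise_def prod_mset_prime_factorization)
qed (simp add: factorwise_def)

lemma ex_mult_bij_if_bij_primes:
  fixes h :: "'a::{factorial_semiring_multiplicative, idom} \<Rightarrow> 'b::{factorial_semiring_multiplicative, idom}"
  assumes h: "bij_betw h {p. prime p} {q. prime q}"
    and units_a: "\<And>u::'a. is_unit u \<Longrightarrow> u = 1 \<or> u = -1" and "(1::'a) \<noteq> -1"
    and units_b: "\<And>u::'b. is_unit u \<Longrightarrow> u = 1 \<or> u = -1" and "(1::'b) \<noteq> -1"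
  shows "\<exists>S :: 'a \<Rightarrow> 'b. bij S \<and> S 0 = 0 \<and> (\<forall>x y. S (x * y) = S x * S y)"
proof (intro exI conjI allI)
  let ?g = "inv_into {p. prime p} h"
  have g: "bij_betw ?g {q. prime q} {p. prime p}"
    using h by (rule bij_betw_inv_into)
  have prime_h: "prime (h p)" if "prime p" for p
    using h that by (auto dest: bij_betwE)
  have prime_g: "prime (?g q)" if "prime q" for q
    using g that by (auto dest: bij_betwE)
  have "factorwise h (factorwise ?g y) = y" for y
    by (rule factorwise_inverse) (use prime_g h units_b \<open>(1::'a) \<noteq> -1\<close> in \<open>auto simp: bij_betw_inv_into_right\<close>)
  moreover have "factorwise ?g (factorwise h x) = x" for x
    by (rule factorwise_inverse) (use prime_h h units_a \<open>(1::'b) \<noteq> -1\<close> in \<open>auto simp: bij_betw_inv_into_left\<close>)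
  ultimately show "bij (factorwise h)"
    by (intro o_bij[of "factorwise ?g"]) (simp_all add: fun_eq_iff)
  show "factorwise h 0 = 0"
    by (simp add: factorwise_def)
  show "factorwise h (x * y) = factorwise h x * factorwise h y" for x y
    by (rule factorwise_mult[OF units_a \<open>(1::'a) \<noteq> -1\<close>])
qed

lemma rat_of_int_div_cases:
  fixes x :: rat
  obtains a b :: int where "b \<noteq> 0" and "x = of_int a / of_int b"
proof -
  obtain a b where q: "quotient_of x = (a, b)"
    by fastforce
  show thesis
    using quotient_of_div[OF q] quotient_of_denom_pos[OF q] by (intro that[of b a]) simp_all
qed

definition map_fract_rat :: "(int \<Rightarrow> 'b::idom) \<Rightarrow> rat \<Rightarrow> 'b fract" where
  "map_fract_rat S x = (case quotient_of x of (a, b) \<Rightarrow> Fract (S a) (S b))"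

context
  fixes S :: "int \<Rightarrow> 'b::idom"
  assumes bij_S: "bij S" and S_0: "S 0 = 0" and S_mult: "\<And>x y. S (x * y) = S x * S y"
begin

private lemma S_eq_0_iff: "S x = 0 \<longleftrightarrow> x = 0"
  using bij_S S_0 by (metis bij_def injD)

lemma map_fract_rat_of_int_div:
  assumes "b \<noteq> 0"
  shows "map_fract_rat S (of_int a / of_int b) = Fract (S a) (S b)"
proof -
  obtain c d where q: "quotient_of (of_int a / of_int b) = (c, d)"
    by fastforce
  have "d > 0"
    using quotient_of_denom_pos[OF q] .
  have "(of_int a / of_int b :: rat) = of_int c / of_int d"
    by (rule quotient_of_div[OF q])
  then have "a * d = c * b"
    using \<open>b \<noteq> 0\<close> \<open>d > 0\<close> by (simp add: frac_eq_eq flip: of_int_mult)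
  then have "S c * S b = S a * S d"
    by (metis S_mult)
  then show ?thesis
    using \<open>b \<noteq> 0\<close> \<open>d > 0\<close> q by (simp add: map_fract_rat_def eq_fract S_eq_0_iff)
qed

lemma map_fract_rat_mult: "map_fract_rat S (x * y) = map_fract_rat S x * map_fract_rat S y"
proof -
  obtain a b c d where ab: "b \<noteq> 0" "x = of_int a / of_int b"
    and cd: "d \<noteq> 0" "y = of_int c / of_int d"
    using rat_of_int_div_cases by metis
  then have "x * y = of_int (a * c) / of_int (b * d)" "b * d \<noteq> 0"
    by simp_all
  then have "map_fract_rat S (x * y) = Fract (S (a * c)) (S (b * d))"
    using map_fract_rat_of_int_div[of "b * d" "a * c"] by simp
  also have "\<dots> = map_fract_rat S x * map_fract_rat S y"
    using ab cd by (simp add: map_fract_rat_of_int_div S_mult)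
  finally show ?thesis .
qed

lemma bij_map_fract_rat: "bij (map_fract_rat S)"
proof (rule bijI)
  show "inj (map_fract_rat S)"
  proof (rule injI)
    fix x y
    assume "map_fract_rat S x = map_fract_rat S y"
    moreover obtain a b c d where ab: "b \<noteq> 0" "x = of_int a / of_int b"
      and cd: "d \<noteq> 0" "y = of_int c / of_int d"
      using rat_of_int_div_cases by metis
    ultimately have "S (a * d) = S (c * b)"
      by (simp add: map_fract_rat_of_int_div eq_fract S_eq_0_iff S_mult)
    then have "a * d = c * b"
      using bij_S by (simp add: bij_def inj_eq)
    then show "x = y"
      using ab cd by (simp add: frac_eq_eq flip: of_int_mult)
  qed
  have S_inv: "S (inv_into UNIV S w) = w" for w
    using bij_S by (simp add: bij_def surj_f_inv_f)
  have "z \<in> range (map_fract_rat S)" for z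
  proof (cases z)
    case (Fract p q)
    then have "inv_into UNIV S q \<noteq> 0"
      using S_inv[of q] S_0 by auto
    then have "map_fract_rat S (of_int (inv_into UNIV S p) / of_int (inv_into UNIV S q)) = z"
      using Fract(1) by (simp add: map_fract_rat_of_int_div S_inv)
    then show ?thesis
      by (metis rangeI)
  qed
  then show "surj (map_fract_rat S)"
    by blast
qed

lemma map_fract_rat_0: "map_fract_rat S 0 = 0"
  using map_fract_rat_of_int_div[of 1 0] S_eq_0_iff[of 1] S_0 by (simp add: fract_collapse)

end

section \<open>The prime field \<open>\<bbbF>\<^sub>3\<close> and the rational function field \<open>\<bbbF>\<^sub>3(t)\<close>\<close>

lemma CHAR_fract: "CHAR('a::idom fract) = CHAR('a)"
proof (rule CHAR_eqI)
  show "of_nat CHAR('a) = (0 :: 'a fract)"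
    by (simp add: of_nat_fract Zero_fract_def)
  show "CHAR('a) dvd n" if "of_nat n = (0 :: 'a fract)" for n
    using that by (simp add: of_nat_fract Zero_fract_def eq_fract of_nat_eq_0_iff_char_dvd)
qed

lemma CHAR_f3t: "CHAR(f3t) = 3"
  by (simp add: CHAR_fract card_three)

lemma f3t_minus_one_eq_two: "(-1 :: f3t) = 2"
proof -
  have "(3 :: f3t) = 0"
    by (metis CHAR_f3t of_nat_CHAR of_nat_numeral)
  then show ?thesis
    unfolding neg_eq_iff_add_eq_0 by simp
qed

lemma units_three_mod_ring: "is_unit (c :: three mod_ring) \<Longrightarrow> c = 1 \<or> c = -1"
proof -
  assume "is_unit c"
  obtain i where i: "i < 3" "c = of_nat i"
    using surj_of_nat_mod_ring[of c] by (auto simp: card_three)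
  have "(3 :: three mod_ring) = 0"
    by (metis card_three of_nat_card_eq_0 of_nat_numeral)
  then have "(of_nat 2 :: three mod_ring) = -1"
    by (simp add: eq_neg_iff_add_eq_0)
  then show ?thesis
    using i \<open>is_unit c\<close> by (auto simp: less_Suc_eq numeral_3_eq_3)
qed

lemma units_poly_three_mod_ring: "is_unit (p :: three mod_ring poly) \<Longrightarrow> p = 1 \<or> p = -1"
proof -
  assume "is_unit p"
  then obtain c where "p = [:c:]" "is_unit c"
    using is_unit_poly_iff by blast
  then show ?thesis
    using units_three_mod_ring[of c] by (auto simp: one_pCons)
qed

lemma one_neq_minus_one_poly_three_mod_ring: "(1 :: three mod_ring poly) \<noteq> -1"
proof
  assume "(1 :: three mod_ring poly) = -1"
  then have "(of_nat 2 :: three mod_ring poly) = 0"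
    by (simp add: eq_neg_iff_add_eq_0)
  moreover have "\<not> CHAR(three mod_ring poly) dvd 2"
    by (simp add: card_three)
  ultimately show False
    by (simp only: of_nat_eq_0_iff_char_dvd)
qed

lemma infinite_prime_polys: "infinite {q :: 'a::field_gcd poly. prime q}"
proof
  assume fin: "finite {q :: 'a poly. prime q}"
  define Q where "Q = (\<Prod>q\<in>{q :: 'a poly. prime q}. q)"
  have "Q \<noteq> 0"
    unfolding Q_def using fin by auto
  define N where "N = [:0, 1:] * Q + 1"
  have "degree N = 1 + degree Q"
    unfolding N_def using \<open>Q \<noteq> 0\<close> by (subst degree_add_eq_left) (auto simp: degree_mult_eq)
  then have "N \<noteq> 0" and "\<not> is_unit N"
    by (auto simp: is_unit_iff_degree)
  then obtain q where "q dvd N" "prime q"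
    using prime_divisor_exists by blast
  moreover have "q dvd Q"
    unfolding Q_def using fin \<open>prime q\<close> by (intro dvd_prodI) auto
  ultimately have "q dvd 1"
    unfolding N_def by (metis dvd_add_right_iff dvd_mult)
  then show False
    using \<open>prime q\<close> not_prime_unit by blast
qed

lemma infinite_prime_ints: "infinite {p :: int. prime p}"
proof
  assume "finite {p :: int. prime p}"
  then have "finite (int ` {p. prime p})"
    by (rule finite_subset[rotated]) auto
  then show False
    using primes_infinite by (auto dest: finite_imageD)
qed

lemma ex_bij_countably_infinite:
  assumes "countable A" "infinite A" "countable B" "infinite B"
  shows "\<exists>h. bij_betw h A B"
  using bij_betw_trans[OF to_nat_on_infinite bij_betw_from_nat_into] assms by blast

lemma ex_mult_bij_rat_f3t: "\<exists>\<sigma> :: rat \<Rightarrow> f3t. bij \<sigma> \<and> \<sigma> 0 = 0 \<and> (\<forall>a b. \<sigma> (a * b) = \<sigma> a * \<sigma> b)"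
proof -
  have "countable (A :: three mod_ring poly set)" for A
  proof (rule countable_image_inj_on[of coeffs])
    show "inj_on coeffs A"
      by (rule inj_onI) (metis coeffs_eq_iff)
  qed simp
  then obtain h :: "int \<Rightarrow> three mod_ring poly" where h: "bij_betw h {p. prime p} {q. prime q}"
    using ex_bij_countably_infinite[OF _ infinite_prime_ints _ infinite_prime_polys] by auto
  have units_int: "u = 1 \<or> u = -1" if "is_unit (u :: int)" for u
    using that by (auto simp: abs_if split: if_splits)
  obtain S :: "int \<Rightarrow> three mod_ring poly" where "bij S" "S 0 = 0" "\<And>x y. S (x * y) = S x * S y"
    using ex_mult_bij_if_bij_primes[OF h units_int _ units_poly_three_mod_ring
        one_neq_minus_one_poly_three_mod_ring] by auto
  then show ?thesis
    using bij_map_fract_rat map_fract_rat_0 map_fract_rat_mult by blast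
qed

section \<open>The structure \<open>(F, +\<^sub>u, \<circ>)\<close> when \<open>F\<close> is a copy of a field\<close>

lemma
  fixes \<phi> :: "'k::field \<Rightarrow> ('v::group_add \<Rightarrow> 'v)"
  assumes inj: "inj \<phi>" and F: "F = range \<phi>" and mult: "\<And>a b. \<phi> (a * b) = \<phi> a \<circ> \<phi> b"
    and one: "\<phi> 1 = id" and zero: "\<phi> 0 = (\<lambda>x. 0)"
    and plus: "\<And>a b. plus_u F u (\<phi> a) (\<phi> b) = \<phi> (a + b)"
  shows field_qk_ring_if_iso: "field (qk_ring F u)"
    and add_pow_qk_ring_if_iso:
      "add_pow (qk_ring F u) n \<one>\<^bsub>qk_ring F u\<^esub> = \<zero>\<^bsub>qk_ring F u\<^esub> \<longleftrightarrow> CHAR('k) dvd n"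
proof -
  have "\<phi> \<in> ring_iso class_ring (qk_ring F u)"
  proof (rule ring_iso_memI)
    show "bij_betw \<phi> (carrier class_ring) (carrier (qk_ring F u))"
      using inj by (simp add: qk_ring_def F bij_betw_def)
  qed (auto simp: qk_ring_def F mult one plus[unfolded F])
  then have "field ((qk_ring F u)\<lparr>zero := \<phi> 0\<rparr>)"
    using field.ring_iso_imp_img_field[OF class_field] by simp
  moreover have "(qk_ring F u)\<lparr>zero := \<phi> 0\<rparr> = qk_ring F u"
    by (simp add: qk_ring_def zero)
  ultimately show "field (qk_ring F u)"
    by simp
  have "add_pow (qk_ring F u) m \<one>\<^bsub>qk_ring F u\<^esub> = \<phi> (of_nat m)" for m
  proof (induction m)
    case (Suc m)
    then show ?case
      using plus[of "of_nat m" 1] by (simp add: add_pow_def nat_pow_def qk_ring_def one add.commute id_def)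
  qed (simp add: add_pow_def nat_pow_def qk_ring_def zero)
  then show "add_pow (qk_ring F u) n \<one>\<^bsub>qk_ring F u\<^esub> = \<zero>\<^bsub>qk_ring F u\<^esub> \<longleftrightarrow> CHAR('k) dvd n"
    using inj by (simp add: qk_ring_def flip: zero) (simp add: inj_eq of_nat_eq_0_iff_char_dvd)
qed

lemma ring_has_charI:
  assumes "p > 0" and "\<And>n. add_pow R n \<one>\<^bsub>R\<^esub> = \<zero>\<^bsub>R\<^esub> \<longleftrightarrow> p dvd n"
  shows "ring_has_char R p"
  using assms by (auto simp: ring_has_char_def dest: dvd_imp_le)

section \<open>Scalar multiplication twisted by a multiplicative bijection\<close>

lemma add_span_subset:
  assumes "S \<subseteq> A" and "0 \<in> A" and "\<And>x y. x \<in> A \<Longrightarrow> y \<in> A \<Longrightarrow> x + y \<in> A"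
    and "\<And>x. x \<in> A \<Longrightarrow> - x \<in> A"
  shows "add_span S \<subseteq> A"
proof
  show "x \<in> A" if "x \<in> add_span S" for x
    using that by induction (use assms in auto)
qed

definition twisted_action :: "('k::field \<Rightarrow> 'l::field) \<Rightarrow> 'k \<Rightarrow> 'k \<times> 'l \<Rightarrow> 'k \<times> 'l" where
  "twisted_action \<sigma> = (\<lambda>l (v1, v2). (l * v1, \<sigma> l * v2))"

locale field_mult_bij =
  fixes \<sigma> :: "'k::field \<Rightarrow> 'l::field"
  assumes bij: "bij \<sigma>" and map_0: "\<sigma> 0 = 0" and map_mult: "\<And>a b. \<sigma> (a * b) = \<sigma> a * \<sigma> b"
begin

abbreviation "act \<equiv> twisted_action \<sigma>"
abbreviation "scalars \<equiv> range act"
abbreviation "\<tau> \<equiv> inv_into UNIV \<sigma>"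

lemma act_apply [simp]: "act l (x, y) = (l * x, \<sigma> l * y)"
  by (simp add: twisted_action_def)

lemma fst_act [simp]: "fst (act l v) = l * fst v"
  and snd_act [simp]: "snd (act l v) = \<sigma> l * snd v"
  by (cases v; simp)+

lemma sigma_eq_iff [simp]: "\<sigma> a = \<sigma> b \<longleftrightarrow> a = b"
  using bij by (simp add: bij_def inj_eq)

lemma sigma_eq_0_iff [simp]: "\<sigma> a = 0 \<longleftrightarrow> a = 0"
  using sigma_eq_iff[of a 0] by (simp add: map_0)

lemma sigma_inv [simp]: "\<sigma> (\<tau> z) = z"
  using bij by (simp add: bij_def surj_f_inv_f)

lemma inv_sigma [simp]: "\<tau> (\<sigma> a) = a"
  using bij by (simp add: bij_def inv_f_f)

lemma sigma_1 [simp]: "\<sigma> 1 = 1"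
  using map_mult[of 1 1] sigma_eq_0_iff[of 1] by simp

lemma inv_sigma_mult: "\<tau> (a * b) = \<tau> a * \<tau> b"
  by (metis map_mult sigma_inv inv_sigma)

text \<open>Both \<open>\<sigma> (-1)\<close> and \<open>\<tau> (-1)\<close> square to \<open>1\<close>; if \<open>\<tau> (-1) = 1\<close>, then \<open>-1 = 1\<close> in the
  codomain.\<close>

lemma sigma_minus_1 [simp]: "\<sigma> (-1) = -1"
proof -
  have "\<tau> (-1) * \<tau> (-1) = 1" "\<sigma> (-1) * \<sigma> (-1) = 1"
    using inv_sigma_mult[of "-1" "-1"] inv_sigma[of 1] map_mult[of "-1" "-1"] by simp_all
  then have "\<tau> (-1) = 1 \<or> \<tau> (-1) = -1" "\<sigma> (-1) = 1 \<or> \<sigma> (-1) = -1"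
    by (simp_all add: square_eq_1_iff)
  then show ?thesis
    using sigma_inv[of "-1"] by (metis sigma_1)
qed

lemma act_add: "act l (v + w) = act l v + act l w"
  by (cases v; cases w) (simp add: algebra_simps)

lemma act_mult: "act a \<circ> act b = act (a * b)"
  by (auto simp: fun_eq_iff map_mult)

lemma act_1: "act 1 = id"
  by (auto simp: fun_eq_iff)

lemma act_0: "act 0 = (\<lambda>v. 0)"
  by (auto simp: fun_eq_iff map_0 zero_prod_def)

lemma act_minus_1: "act (-1) = uminus"
  by (auto simp: fun_eq_iff)

lemma inj_act: "inj act"
proof (rule injI)
  fix a b
  assume "act a = act b"
  then have "act a (1, 0) = act b (1, 0)"
    by simp
  then show "a = b"
    by simp
qed

lemma act_eq_act_imp: "act a v = act b v \<Longrightarrow> a = b \<or> v = 0"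
  by (cases v) (auto simp: zero_prod_def)

lemma act_inverse: "a \<noteq> 0 \<Longrightarrow> act (inverse a) (act a v) = v"
  using act_mult[of "inverse a" a] by (metis act_1 comp_apply id_apply left_inverse)

lemma zero_on_act_iff: "zero_on W (act a) \<longleftrightarrow> a = 0 \<or> W \<subseteq> {0}"
proof
  show "zero_on W (act a) \<Longrightarrow> a = 0 \<or> W \<subseteq> {0}"
    using act_eq_act_imp[of a _ 0] by (auto simp: zero_on_def act_0)
  show "a = 0 \<or> W \<subseteq> {0} \<Longrightarrow> zero_on W (act a)"
    by (auto simp: zero_on_def act_0 zero_prod_def)
qed

lemma quasi_kernel_if_axis:
  assumes "v \<in> W" and "fst v = 0 \<or> snd v = 0"
  shows "v \<in> quasi_kernel W scalars"
  unfolding quasi_kernel_def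
proof (intro CollectI conjI ballI)
  fix \<alpha> \<beta>
  assume "\<alpha> \<in> scalars" "\<beta> \<in> scalars"
  then obtain a b where ab: "\<alpha> = act a" "\<beta> = act b"
    by auto
  obtain x y where v: "v = (x, y)"
    by fastforce
  show "\<exists>\<gamma>\<in>scalars. \<alpha> v + \<beta> v = \<gamma> v"
  proof (cases "y = 0")
    case True
    show ?thesis
      by (rule bexI[of _ "act (a + b)"]) (auto simp: ab v True algebra_simps)
  next
    case False
    then have "x = 0"
      using assms(2) v by simp
    show ?thesis
      by (rule bexI[of _ "act (\<tau> (\<sigma> a + \<sigma> b))"]) (auto simp: ab v \<open>x = 0\<close> algebra_simps)
  qed
qed (fact \<open>v \<in> W\<close>)

lemma near_vector_space_if_closed:
  assumes "0 \<in> W" and add: "\<And>v w. v \<in> W \<Longrightarrow> w \<in> W \<Longrightarrow> v + w \<in> W"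
    and "\<And>v. v \<in> W \<Longrightarrow> - v \<in> W" and act: "\<And>a v. v \<in> W \<Longrightarrow> act a v \<in> W"
    and "W \<subseteq> add_span (quasi_kernel W scalars)"
  shows "near_vector_space W scalars"
  unfolding near_vector_space_def
proof (intro conjI ballI impI)
  fix \<alpha>
  assume "\<alpha> \<in> scalars" "\<not> zero_on W \<alpha>"
  then obtain a where a: "\<alpha> = act a" "a \<noteq> 0"
    by (auto simp: zero_on_act_iff)
  have "act a (act (inverse a) v) = v" for v
    using act_inverse[of "inverse a" v] \<open>a \<noteq> 0\<close> by simp
  then show "bij_betw \<alpha> W W"
    unfolding a(1) by (intro bij_betwI[of _ _ _ "act (inverse a)"]) (use act act_inverse a in auto)
  show "\<exists>\<beta>\<in>scalars. \<forall>v\<in>W. \<beta> (\<alpha> v) = v"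
    by (rule bexI[of _ "act (inverse a)"]) (use act_inverse a in auto)
next
  fix \<alpha> \<beta>
  assume "\<alpha> \<in> scalars" "\<beta> \<in> scalars"
  then obtain a b where ab: "\<alpha> = act a" "\<beta> = act b"
    by auto
  show "\<exists>\<gamma>\<in>scalars. agree_on W \<gamma> (\<alpha> \<circ> \<beta>)"
    by (rule bexI[of _ "act (a * b)"]) (auto simp: agree_on_def ab act_mult)
  show "agree_on W \<alpha> \<beta> \<or> v = 0" if "\<alpha> v = \<beta> v" for v
    using act_eq_act_imp[of a v b] that by (auto simp: agree_on_def ab)
next
  show "\<exists>\<alpha>\<in>scalars. zero_on W \<alpha>"
    by (rule bexI[of _ "act 0"]) (simp_all add: zero_on_act_iff)
  show "\<exists>\<alpha>\<in>scalars. agree_on W \<alpha> id"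
    by (rule bexI[of _ "act 1"]) (simp add: agree_on_def act_1, simp)
  show "\<exists>\<alpha>\<in>scalars. agree_on W \<alpha> uminus"
    by (rule bexI[of _ "act (-1)"]) (simp add: agree_on_def act_minus_1, simp)
qed (use assms act_add in auto)

lemma near_vector_space_UNIV: "near_vector_space UNIV scalars"
proof (rule near_vector_space_if_closed)
  show "UNIV \<subseteq> add_span (quasi_kernel UNIV scalars)"
  proof
    fix v :: "'k \<times> 'l"
    have "(fst v, 0) \<in> add_span (quasi_kernel UNIV scalars)"
      and "(0, snd v) \<in> add_span (quasi_kernel UNIV scalars)"
      by (auto intro!: add_span.span_base quasi_kernel_if_axis)
    then have "(fst v, 0) + (0, snd v) \<in> add_span (quasi_kernel UNIV scalars)"
      by (rule add_span.span_add)
    then show "v \<in> add_span (quasi_kernel UNIV scalars)"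
      by simp
  qed
qed auto

lemma plus_u_left_axis:
  assumes "x \<noteq> 0"
  shows "plus_u scalars (x, 0) (act a) (act b) = act (a + b)"
  unfolding plus_u_def
proof (rule the_equality)
  fix \<gamma>
  assume "\<gamma> \<in> scalars \<and> act a (x, 0) + act b (x, 0) = \<gamma> (x, 0)"
  then obtain c where "\<gamma> = act c" "(a + b) * x = c * x"
    by (auto simp: algebra_simps)
  then show "\<gamma> = act (a + b)"
    using assms by simp
qed (simp add: algebra_simps)

lemma plus_u_right_axis:
  assumes "y \<noteq> 0"
  shows "plus_u scalars (0, y) (act (\<tau> a)) (act (\<tau> b)) = act (\<tau> (a + b))"
  unfolding plus_u_def
proof (rule the_equality)
  fix \<gamma>
  assume "\<gamma> \<in> scalars \<and> act (\<tau> a) (0, y) + act (\<tau> b) (0, y) = \<gamma> (0, y)"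
  then obtain c where "\<gamma> = act c" "(a + b) * y = \<sigma> c * y"
    by (auto simp: algebra_simps)
  then show "\<gamma> = act (\<tau> (a + b))"
    using assms by (metis inv_sigma mult_cancel_right)
qed (simp add: algebra_simps)

lemma regular_nvs_axis:
  assumes W: "W = UNIV \<times> {0} \<or> W = {0} \<times> UNIV"
  shows "regular_nvs W scalars"
proof -
  have qk: "quasi_kernel W scalars = W"
  proof
    show "quasi_kernel W scalars \<subseteq> W"
      by (auto simp: quasi_kernel_def)
    show "W \<subseteq> quasi_kernel W scalars"
      using W by (auto intro: quasi_kernel_if_axis)
  qed
  have "near_vector_space W scalars"
  proof (rule near_vector_space_if_closed)
    show "W \<subseteq> add_span (quasi_kernel W scalars)"
      unfolding qk by (auto intro: add_span.span_base)
  qed (use W in \<open>auto simp: zero_prod_def\<close>)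
  moreover have "(1, 0) \<in> W \<or> (0, 1) \<in> W"
    using W by auto
  then have "\<not> zero_on W (act 1)"
    by (auto simp: zero_on_act_iff zero_prod_def)
  moreover have "u + act 1 v \<in> W" if "u \<in> W" "v \<in> W" for u v
    using W that by (auto simp: act_1)
  ultimately show ?thesis
    unfolding regular_nvs_def qk by blast
qed

lemma
  assumes "x \<noteq> 0"
  shows field_qk_ring_left_axis: "field (qk_ring scalars (x, 0))"
    and add_pow_qk_ring_left_axis: "add_pow (qk_ring scalars (x, 0)) n \<one>\<^bsub>qk_ring scalars (x, 0)\<^esub>
      = \<zero>\<^bsub>qk_ring scalars (x, 0)\<^esub> \<longleftrightarrow> CHAR('k) dvd n"
  using field_qk_ring_if_iso[where \<phi> = act, OF inj_act refl _ act_1 act_0 plus_u_left_axis[OF assms]]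
    add_pow_qk_ring_if_iso[where \<phi> = act, OF inj_act refl _ act_1 act_0 plus_u_left_axis[OF assms]]
  by (simp_all add: act_mult)

lemma
  assumes "y \<noteq> 0"
  shows field_qk_ring_right_axis: "field (qk_ring scalars (0, y))"
    and add_pow_qk_ring_right_axis: "add_pow (qk_ring scalars (0, y)) n \<one>\<^bsub>qk_ring scalars (0, y)\<^esub>
      = \<zero>\<^bsub>qk_ring scalars (0, y)\<^esub> \<longleftrightarrow> CHAR('l) dvd n"
proof -
  let ?\<phi> = "\<lambda>a. act (\<tau> a)"
  have inj: "inj ?\<phi>"
    by (rule injI) (metis inj_act injD sigma_inv)
  have range: "scalars = range ?\<phi>"
    by (metis (no_types) image_image inv_sigma surj_def)
  have mult: "?\<phi> (a * b) = ?\<phi> a \<circ> ?\<phi> b" for a b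
    by (simp add: inv_sigma_mult act_mult)
  have one: "?\<phi> 1 = id" and zero: "?\<phi> 0 = (\<lambda>v. 0)"
    using inv_sigma[of 1] inv_sigma[of 0] by (simp_all add: map_0 act_1 act_0)
  show "field (qk_ring scalars (0, y))"
    by (rule field_qk_ring_if_iso[where \<phi> = ?\<phi>, OF inj range mult one zero plus_u_right_axis[OF assms]])
  show "add_pow (qk_ring scalars (0, y)) n \<one>\<^bsub>qk_ring scalars (0, y)\<^esub>
      = \<zero>\<^bsub>qk_ring scalars (0, y)\<^esub> \<longleftrightarrow> CHAR('l) dvd n"
    by (rule add_pow_qk_ring_if_iso[where \<phi> = ?\<phi>, OF inj range mult one zero plus_u_right_axis[OF assms]])
qed


lemma ring_char_zero_left_axis:
  assumes "CHAR('k) = 0" and "u \<in> UNIV \<times> {0} - {0}"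
  shows "ring_char_zero (qk_ring scalars u)"
  using assms add_pow_qk_ring_left_axis[of "fst u"] by (cases u) (auto simp: ring_char_zero_def zero_prod_def)

lemma ring_has_char_right_axis:
  assumes "CHAR('l) = p" and "p > 0" and "u \<in> {0} \<times> UNIV - {0}"
  shows "ring_has_char (qk_ring scalars u) p"
  using assms add_pow_qk_ring_right_axis[of "snd u"] by (cases u) (auto intro!: ring_has_charI simp: zero_prod_def)

end

locale twisted_scalars = field_mult_bij \<sigma> for \<sigma> :: "'k::field \<Rightarrow> 'l::field" +
  assumes sigma_2: "\<sigma> 2 \<noteq> 2"
begin

lemma quasi_kernel_iff: "v \<in> quasi_kernel W scalars \<longleftrightarrow> v \<in> W \<and> (fst v = 0 \<or> snd v = 0)"
proof
  assume v: "v \<in> quasi_kernel W scalars"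
  then obtain c where c: "act 1 v + act 1 v = act c v"
    unfolding quasi_kernel_def by blast
  have "fst v + fst v = c * fst v" "snd v + snd v = \<sigma> c * snd v"
    using arg_cong[OF c, of fst] arg_cong[OF c, of snd] by (simp_all add: act_1)
  then have "fst v = 0 \<or> snd v = 0"
    using sigma_2 by (auto simp: algebra_simps)
  then show "v \<in> W \<and> (fst v = 0 \<or> snd v = 0)"
    using v by (simp add: quasi_kernel_def)
qed (use quasi_kernel_if_axis in blast)

lemma regular_nvs_subset_axis:
  assumes "regular_nvs W scalars"
  shows "W \<subseteq> UNIV \<times> {0} \<or> W \<subseteq> {0} \<times> UNIV"
proof (rule ccontr)
  assume not_axis: "\<not> (W \<subseteq> UNIV \<times> {0} \<or> W \<subseteq> {0} \<times> UNIV)"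
  have W: "W \<subseteq> add_span (quasi_kernel W scalars)"
    using assms by (simp add: regular_nvs_def near_vector_space_def)
  have off_axis: "\<exists>w \<in> quasi_kernel W scalars. w \<notin> A" if "A = UNIV \<times> {0} \<or> A = {0} \<times> UNIV" for A
  proof (rule ccontr)
    assume "\<not> ?thesis"
    then have "add_span (quasi_kernel W scalars) \<subseteq> A"
      by (intro add_span_subset) (use that in \<open>auto simp: zero_prod_def\<close>)
    then show False
      using W not_axis that by blast
  qed
  obtain u where u: "u \<in> quasi_kernel W scalars" "snd u \<noteq> 0"
    using off_axis[of "UNIV \<times> {0}"] by (auto simp: mem_Times_iff)
  obtain v where v: "v \<in> quasi_kernel W scalars" "fst v \<noteq> 0"
    using off_axis[of "{0} \<times> UNIV"] by (auto simp: mem_Times_iff)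
  have "fst u = 0" "snd v = 0" "u \<noteq> 0" "v \<noteq> 0"
    using u v by (auto simp: quasi_kernel_iff)
  obtain c where "c \<in> scalars" "\<not> zero_on W c" "v + c u \<in> quasi_kernel W scalars"
    using assms u v \<open>u \<noteq> 0\<close> \<open>v \<noteq> 0\<close> unfolding regular_nvs_def by blast
  moreover obtain a where "c = act a" "a \<noteq> 0"
    using calculation by (auto simp: zero_on_act_iff)
  ultimately show False
    using u v \<open>fst u = 0\<close> \<open>snd v = 0\<close> by (simp add: quasi_kernel_iff)
qed

lemma nvs_blocks: "{W. nvs_block UNIV scalars W} = {UNIV \<times> {0}, {0} \<times> UNIV}"
proof -
  have "(1, 0) \<in> (UNIV :: 'k set) \<times> {0 :: 'l} - {0} \<times> UNIV"
    and "(0, 1) \<in> {0 :: 'k} \<times> (UNIV :: 'l set) - UNIV \<times> {0}"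
    by simp_all
  then have incomparable: "\<not> (UNIV :: 'k set) \<times> {0 :: 'l} \<subseteq> {0} \<times> UNIV"
    "\<not> {0 :: 'k} \<times> (UNIV :: 'l set) \<subseteq> UNIV \<times> {0}"
    by blast+
  have maximal: "W = A"
    if A: "A = UNIV \<times> {0} \<or> A = {0} \<times> UNIV" and "A \<subseteq> W" "regular_nvs W scalars" for A W
  proof -
    consider "W \<subseteq> UNIV \<times> {0}" | "W \<subseteq> {0} \<times> UNIV"
      using regular_nvs_subset_axis[OF \<open>regular_nvs W scalars\<close>] by blast
    then show ?thesis
      using A \<open>A \<subseteq> W\<close> incomparable by cases auto
  qed
  have "nvs_block UNIV scalars W \<longleftrightarrow> W = UNIV \<times> {0} \<or> W = {0} \<times> UNIV" for W
  proof
    assume "nvs_block UNIV scalars W"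
    then have "regular_nvs W scalars"
      and max: "\<And>W'. W \<subseteq> W' \<Longrightarrow> regular_nvs W' scalars \<Longrightarrow> W' = W"
      by (auto simp: nvs_block_def)
    consider "W \<subseteq> UNIV \<times> {0}" | "W \<subseteq> {0} \<times> UNIV"
      using regular_nvs_subset_axis[OF \<open>regular_nvs W scalars\<close>] by blast
    then show "W = UNIV \<times> {0} \<or> W = {0} \<times> UNIV"
      by cases (use max regular_nvs_axis in metis)+
  next
    assume "W = UNIV \<times> {0} \<or> W = {0} \<times> UNIV"
    then show "nvs_block UNIV scalars W"
      unfolding nvs_block_def using regular_nvs_axis maximal by auto
  qed
  then show ?thesis
    by auto
qed

lemma field_qk_ring: "u \<in> quasi_kernel UNIV scalars - {0} \<Longrightarrow> field (qk_ring scalars u)"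
  using field_qk_ring_left_axis[of "fst u"] field_qk_ring_right_axis[of "snd u"]
  by (cases u) (auto simp: quasi_kernel_iff zero_prod_def)

end

theorem mainTheorem19:
  "\<exists>\<sigma> :: rat \<Rightarrow> f3t.
     \<sigma> 0 = 0 \<and> bij_betw \<sigma> (UNIV - {0}) (UNIV - {0}) \<and> (\<forall>a b. \<sigma> (a * b) = \<sigma> a * \<sigma> b) \<and>
     (let act = (\<lambda>l::rat. \<lambda>(v1::rat, v2::f3t). (l * v1, \<sigma> l * v2));
          F = range act;
          V = (UNIV :: (rat \<times> f3t) set)
      in inj act \<and> near_vector_space V F \<and> (\<forall>\<alpha>\<in>F. \<forall>\<beta>\<in>F. \<alpha> \<circ> \<beta> = \<beta> \<circ> \<alpha>) \<and>
         {W. nvs_block V F W} = {UNIV \<times> {0}, {0} \<times> UNIV} \<and>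
         (\<forall>u \<in> quasi_kernel V F - {0}. field (qk_ring F u)) \<and>
         (\<forall>u \<in> quasi_kernel V F \<inter> (UNIV \<times> {0}) - {0}. ring_char_zero (qk_ring F u)) \<and>
         (\<forall>u \<in> quasi_kernel V F \<inter> ({0} \<times> UNIV) - {0}. ring_has_char (qk_ring F u) 3))"
proof -
  obtain \<sigma> :: "rat \<Rightarrow> f3t" where "bij \<sigma>" "\<sigma> 0 = 0" "\<And>a b. \<sigma> (a * b) = \<sigma> a * \<sigma> b"
    using ex_mult_bij_rat_f3t by blast
  then interpret field_mult_bij \<sigma>
    by unfold_locales
  have "\<sigma> 2 \<noteq> 2"
    using sigma_minus_1 sigma_eq_iff[of 2 "-1"] f3t_minus_one_eq_two by simp
  then interpret twisted_scalars \<sigma>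
    by unfold_locales
  have "bij_betw \<sigma> (UNIV - {0}) (UNIV - {0})"
    by (rule bij_betw_DiffI) (use bij map_0 in \<open>auto simp: bij_betw_def\<close>)
  moreover have "\<forall>\<alpha>\<in>scalars. \<forall>\<beta>\<in>scalars. \<alpha> \<circ> \<beta> = \<beta> \<circ> \<alpha>"
    by (auto simp: act_mult mult.commute)
  moreover note inj_act near_vector_space_UNIV nvs_blocks field_qk_ring
    ring_char_zero_left_axis[OF CHAR_eq_0] ring_has_char_right_axis[OF CHAR_f3t]
  ultimately show ?thesis
    using map_0 map_mult by (intro exI[of _ \<sigma>]) (auto simp: twisted_action_def Let_def)
qed

end
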